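(* Let $(M,g)$ be a time-oriented Lorentzian manifold with a continuous Lorentzian metric $g$. Then for every $p\in M$ the timelike future $I^+(p,M)$ and the timelike past $I^-(p,M)$ are open subsets of $M$.
   Context: A timelike curve is a piecewise smooth curve whose tangent vectors (where differentiable) are timelike, with left and right derivatives at each point lying in the same component of the timelike double cone; it is future (past) directed if its tangent vectors lie in the future (past) cone determined by the time orientation. $I^+(p,M)$ is the set of $q\in M$ such that there is a future directed timelike curve from $p$ to $q$; $I^-(p,M)$ is the set of $q$ such that there is a past directed timelike curve from $p$ to $q$. A time orientation is a continuous choice of one component of the timelike cone at each point, locally containing $\partial_{x^0}$ of some chart. *)

theory Defs
  imports "HOL-Analysis.Analysis"
begin

text \<open>A topological n-manifold M is modelled as a type 'm (Hausdorff, second countable),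
  with a smooth atlas of charts (U, phi), phi : U -> real^'n.  All tangent data
  (metric, tangent vectors, time orientation) are expressed in chart coordinates,
  with the usual transformation laws under the Jacobian of the transition maps.\<close>

type_synonym ('m,'n) chart = "'m set \<times> ('m \<Rightarrow> real^'n)"

definition partial_dir :: "'n::finite \<Rightarrow> (real^'n \<Rightarrow> real^'k) \<Rightarrow> real^'n \<Rightarrow> real^'k" where
  "partial_dir i f x = vector_derivative (\<lambda>t. f (x + t *\<^sub>R axis i 1)) (at 0)"

fun iter_partial :: "'n::finite list \<Rightarrow> (real^'n \<Rightarrow> real^'k) \<Rightarrow> real^'n \<Rightarrow> real^'k" where
  "iter_partial [] f = f"
| "iter_partial (i # is) f = partial_dir i (iter_partial is f)"

definition smooth_on :: "(real^'n::finite) set \<Rightarrow> (real^'n \<Rightarrow> real^'k) \<Rightarrow> bool" where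
  "smooth_on U f \<longleftrightarrow>
     (\<forall>is. continuous_on U (iter_partial is f) \<and>
        (\<forall>i. \<forall>x\<in>U. (\<lambda>t. iter_partial is f (x + t *\<^sub>R axis i 1)) differentiable (at 0)))"

fun cderiv :: "nat \<Rightarrow> (real \<Rightarrow> real^'n) \<Rightarrow> real set \<Rightarrow> real \<Rightarrow> real^'n" where
  "cderiv 0 f S = f"
| "cderiv (Suc k) f S = (\<lambda>t. vector_derivative (cderiv k f S) (at t within S))"

definition smooth_curve_on :: "real set \<Rightarrow> (real \<Rightarrow> real^'n) \<Rightarrow> bool" where
  "smooth_curve_on S f \<longleftrightarrow>
     (\<forall>k. \<forall>t\<in>S. (cderiv k f S has_vector_derivative cderiv (Suc k) f S t) (at t within S))"

definition is_chart :: "('m::topological_space, 'n::finite) chart \<Rightarrow> bool" where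
  "is_chart c \<longleftrightarrow> open (fst c) \<and> inj_on (snd c) (fst c) \<and> continuous_on (fst c) (snd c) \<and>
     open (snd c ` fst c) \<and> continuous_on (snd c ` fst c) (inv_into (fst c) (snd c))"

definition transition :: "('m, 'n::finite) chart \<Rightarrow> ('m, 'n) chart \<Rightarrow> real^'n \<Rightarrow> real^'n" where
  "transition c d = snd d \<circ> inv_into (fst c) (snd c)"

definition smooth_atlas :: "('m::{t2_space,second_countable_topology}, 'n::finite) chart set \<Rightarrow> bool" where
  "smooth_atlas A \<longleftrightarrow> (\<forall>c\<in>A. is_chart c) \<and> (\<Union>c\<in>A. fst c) = UNIV \<and>
     (\<forall>c\<in>A. \<forall>d\<in>A. smooth_on (snd c ` (fst c \<inter> fst d)) (transition c d))"

definition jac :: "('m, 'n::finite) chart \<Rightarrow> ('m, 'n) chart \<Rightarrow> 'm \<Rightarrow> real^'n^'n" where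
  "jac c d p = matrix (frechet_derivative (transition c d) (at (snd c p)))"

definition lorentz_sig :: "real^'n::finite^'n \<Rightarrow> bool" where
  "lorentz_sig G \<longleftrightarrow> transpose G = G \<and>
     (\<exists>(P::real^'n^'n) i0. invertible P \<and>
        transpose P ** G ** P = (\<chi> i j. if i = j then (if i = i0 then -1 else 1) else 0))"

text \<open>g c p is the coefficient matrix of the metric at p in chart c.\<close>
definition cont_lorentz_metric ::
  "('m::topological_space, 'n::finite) chart set \<Rightarrow> (('m,'n) chart \<Rightarrow> 'm \<Rightarrow> real^'n^'n) \<Rightarrow> bool" where
  "cont_lorentz_metric A g \<longleftrightarrow>
     (\<forall>c\<in>A. continuous_on (fst c) (g c) \<and> (\<forall>p\<in>fst c. lorentz_sig (g c p))) \<and>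
     (\<forall>c\<in>A. \<forall>d\<in>A. \<forall>p\<in>fst c \<inter> fst d. g c p = transpose (jac c d p) ** g d p ** jac c d p)"

definition tcone :: "(('m,'n::finite) chart \<Rightarrow> 'm \<Rightarrow> real^'n^'n) \<Rightarrow> ('m,'n) chart \<Rightarrow> 'm \<Rightarrow> (real^'n) set" where
  "tcone g c p = {v. v \<bullet> (g c p *v v) < 0}"

text \<open>A time orientation: F c p is the chosen (future) component of the timelike cone at p,
  in chart-c coordinates; it is compatible with chart changes, and locally contains the
  coordinate vector field of some coordinate (the x^0 direction) of some chart.\<close>
definition time_orientation ::
  "('m::topological_space, 'n::finite) chart set \<Rightarrow> (('m,'n) chart \<Rightarrow> 'm \<Rightarrow> real^'n^'n)
     \<Rightarrow> (('m,'n) chart \<Rightarrow> 'm \<Rightarrow> (real^'n) set) \<Rightarrow> bool" where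
  "time_orientation A g F \<longleftrightarrow>
     (\<forall>c\<in>A. \<forall>p\<in>fst c. \<exists>w\<in>tcone g c p. F c p = connected_component_set (tcone g c p) w) \<and>
     (\<forall>c\<in>A. \<forall>d\<in>A. \<forall>p\<in>fst c \<inter> fst d. \<forall>v. v \<in> F c p \<longleftrightarrow> jac c d p *v v \<in> F d p) \<and>
     (\<forall>p. \<exists>c\<in>A. \<exists>W i0. open W \<and> p \<in> W \<and> W \<subseteq> fst c \<and> (\<forall>q\<in>W. axis i0 1 \<in> F c q))"

definition smooth_piece :: "('m::topological_space, 'n::finite) chart set \<Rightarrow> (real \<Rightarrow> 'm) \<Rightarrow> real set \<Rightarrow> bool" where
  "smooth_piece A \<gamma> S \<longleftrightarrow>
     (\<forall>t\<in>S. \<forall>c\<in>A. \<gamma> t \<in> fst c \<longrightarrow>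
        (\<exists>\<delta>>0. \<gamma> ` (S \<inter> ball t \<delta>) \<subseteq> fst c \<and> smooth_curve_on (S \<inter> ball t \<delta>) (snd c \<circ> \<gamma>)))"

definition pw_smooth_curve :: "('m::topological_space, 'n::finite) chart set \<Rightarrow> (real \<Rightarrow> 'm) \<Rightarrow> real \<Rightarrow> real \<Rightarrow> bool" where
  "pw_smooth_curve A \<gamma> a b \<longleftrightarrow> a < b \<and> continuous_on {a..b} \<gamma> \<and>
     (\<exists>P. finite P \<and> a \<in> P \<and> b \<in> P \<and> P \<subseteq> {a..b} \<and>
        (\<forall>s\<in>P. \<forall>u\<in>P. s < u \<and> {s<..<u} \<inter> P = {} \<longrightarrow> smooth_piece A \<gamma> {s..u}))"

definition directed_timelike_curve ::
  "bool \<Rightarrow> ('m::topological_space, 'n::finite) chart set \<Rightarrow> (('m,'n) chart \<Rightarrow> 'm \<Rightarrow> (real^'n) set)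
     \<Rightarrow> (real \<Rightarrow> 'm) \<Rightarrow> real \<Rightarrow> real \<Rightarrow> bool" where
  "directed_timelike_curve fut A F \<gamma> a b \<longleftrightarrow> pw_smooth_curve A \<gamma> a b \<and>
     (\<forall>t\<in>{a..<b}. \<forall>c\<in>A. \<gamma> t \<in> fst c \<longrightarrow>
        (\<exists>v. ((snd c \<circ> \<gamma>) has_vector_derivative v) (at t within {t..b}) \<and>
             (if fut then v else - v) \<in> F c (\<gamma> t))) \<and>
     (\<forall>t\<in>{a<..b}. \<forall>c\<in>A. \<gamma> t \<in> fst c \<longrightarrow>
        (\<exists>v. ((snd c \<circ> \<gamma>) has_vector_derivative v) (at t within {a..t}) \<and>
             (if fut then v else - v) \<in> F c (\<gamma> t)))"

definition I_plus where
  "I_plus A F p = {q. \<exists>\<gamma> a b. directed_timelike_curve True A F \<gamma> a b \<and> \<gamma> a = p \<and> \<gamma> b = q}"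

definition I_minus where
  "I_minus A F p = {q. \<exists>\<gamma> a b. directed_timelike_curve False A F \<gamma> a b \<and> \<gamma> a = p \<and> \<gamma> b = q}"

end

theory Submission
  imports Defs
begin

(* Let gamma be a future directed timelike curve from p to q, and take a chart c near q in which
   the time orientation contains a fixed coordinate vector e at every point. In these coordinates
   the future cone at a point is the connected component of e in the open set of vectors w with
   w . (g w) < 0. Since g is continuous, a compactness (tube lemma) argument shows that a small ball
   around the left tangent vector v of gamma at q lies in the future cone at every point near q.
   For s close to the final parameter b, the difference quotient of gamma over [s, b] is close to v,
   and so is the slope of the coordinate segment from gamma s to any point q' close enough to q.
   Replacing gamma on [s, b] by this segment gives a future directed timelike curve from p to q',
   so a neighbourhood of q lies in I+(p). Past directed curves are handled in the same way. *)

lemma increment_bound_by_derivative_deviation: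
  fixes \<phi> :: "real \<Rightarrow> 'b::real_normed_vector"
  assumes der: "\<And>\<tau>. \<tau> \<in> closed_segment 0 t \<Longrightarrow> (\<phi> has_vector_derivative \<phi>' \<tau>) (at \<tau>)"
    and near: "\<And>\<tau>. \<tau> \<in> closed_segment 0 t \<Longrightarrow> norm (\<phi>' \<tau> - p) \<le> e"
  shows "norm (\<phi> t - \<phi> 0 - t *\<^sub>R p) \<le> e * \<bar>t\<bar>"
proof -
  have "norm ((\<phi> t - t *\<^sub>R p) - (\<phi> 0 - 0 *\<^sub>R p)) \<le> e * norm (t - 0)"
  proof (rule differentiable_bound[where f' = "\<lambda>\<tau> u. u *\<^sub>R (\<phi>' \<tau> - p)"])
    fix \<tau> assume \<tau>: "\<tau> \<in> closed_segment 0 t"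
    have "((\<lambda>\<tau>. \<phi> \<tau> - \<tau> *\<^sub>R p) has_vector_derivative \<phi>' \<tau> - p) (at \<tau>)"
      using der[OF \<tau>] by (auto intro!: derivative_eq_intros)
    then show "((\<lambda>\<tau>. \<phi> \<tau> - \<tau> *\<^sub>R p) has_derivative (\<lambda>u. u *\<^sub>R (\<phi>' \<tau> - p))) (at \<tau> within closed_segment 0 t)"
      by (simp add: has_vector_derivative_def has_derivative_at_withinI)
    have "onorm (\<lambda>u. u *\<^sub>R (\<phi>' \<tau> - p)) = norm (\<phi>' \<tau> - p)"
      using onorm_scaleR_left[OF bounded_linear_ident, of "\<phi>' \<tau> - p"] by (simp add: onorm_id)
    then show "onorm (\<lambda>u. u *\<^sub>R (\<phi>' \<tau> - p)) \<le> e"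
      using near[OF \<tau>] by simp
  qed auto
  then show ?thesis by (simp add: algebra_simps)
qed

lemma increment_along_coordinates_bound:
  fixes G :: "real^'n::finite \<Rightarrow> 'b::real_normed_vector"
  assumes der: "\<And>i z. dist z x < d \<Longrightarrow> ((\<lambda>t. G (z + t *\<^sub>R axis i 1)) has_vector_derivative P i z) (at 0)"
    and near: "\<And>i z. dist z x < d \<Longrightarrow> norm (P i z - P i x) \<le> e"
    and h: "norm h < d" and S: "finite S"
  shows "norm (G (x + (\<chi> j. if j \<in> S then h$j else 0)) - G x - (\<Sum>i\<in>S. h$i *\<^sub>R P i x))
    \<le> e * card S * norm h"
proof -
  define hS where "hS S = (\<chi> j. if j \<in> S then h$j else 0)" for S
  have "e \<ge> 0" using near[of x] h norm_ge_zero[of h] by force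
  have "norm (G (x + hS S) - G x - (\<Sum>i\<in>S. h$i *\<^sub>R P i x)) \<le> e * card S * norm h"
    using S
  proof (induction S rule: finite_induct)
    case empty
    have "hS {} = 0" by (simp add: hS_def vec_eq_iff)
    then show ?case by simp
  next
    case (insert i S)
    define y where "y = x + hS S"
    have "norm (G (y + h$i *\<^sub>R axis i 1) - G y - h$i *\<^sub>R P i x) \<le> e * \<bar>h$i\<bar>"
    proof (rule increment_bound_by_derivative_deviation[where \<phi> = "\<lambda>\<tau>. G (y + \<tau> *\<^sub>R axis i 1)",
          simplified, where \<phi>' = "\<lambda>\<tau>. P i (y + \<tau> *\<^sub>R axis i 1)"])
      fix \<tau> assume \<tau>: "\<tau> \<in> closed_segment 0 (h$i)"
      define z where "z = y + \<tau> *\<^sub>R axis i 1"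
      have "norm (hS S + \<tau> *\<^sub>R axis i 1) \<le> norm h"
        using insert \<tau> by (intro norm_le_componentwise_cart)
          (auto simp: hS_def axis_def closed_segment_eq_real_ivl split: if_splits)
      then have "dist z x < d" using h by (simp add: z_def y_def dist_norm)
      then show "norm (P i (y + \<tau> *\<^sub>R axis i 1) - P i x) \<le> e"
        using near by (simp add: z_def)
      have "((\<lambda>t. G (z + t *\<^sub>R axis i 1)) \<circ> (\<lambda>s. s - \<tau>) has_vector_derivative 1 *\<^sub>R P i z) (at \<tau>)"
        by (rule vector_diff_chain_at) (auto intro!: derivative_eq_intros der \<open>dist z x < d\<close>)
      then show "((\<lambda>\<tau>. G (y + \<tau> *\<^sub>R axis i 1)) has_vector_derivative P i (y + \<tau> *\<^sub>R axis i 1)) (at \<tau>)"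
        by (simp add: z_def o_def algebra_simps)
    qed
    also have "\<dots> \<le> e * norm h"
      using \<open>e \<ge> 0\<close> component_le_norm_cart[of h i] by (simp add: mult_left_mono)
    also have "y + h$i *\<^sub>R axis i 1 = x + hS (insert i S)"
      using insert by (auto simp: hS_def y_def vec_eq_iff axis_def)
    finally have "norm (G (x + hS (insert i S)) - G (x + hS S) - h$i *\<^sub>R P i x) \<le> e * norm h"
      by (simp add: y_def)
    with insert.IH
    have "norm ((G (x + hS (insert i S)) - G (x + hS S) - h$i *\<^sub>R P i x)
        + (G (x + hS S) - G x - (\<Sum>i\<in>S. h$i *\<^sub>R P i x))) \<le> e * norm h + e * card S * norm h"
      by (intro norm_triangle_le add_mono)
    then show ?case using insert by (simp add: algebra_simps)
  qed
  then show ?thesis by (simp add: hS_def)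
qed

lemma has_derivative_continuous_partials:
  fixes G :: "real^'n::finite \<Rightarrow> 'b::real_normed_vector"
  assumes U: "open U" and x: "x \<in> U"
    and der: "\<And>i z. z \<in> U \<Longrightarrow> ((\<lambda>t. G (z + t *\<^sub>R axis i 1)) has_vector_derivative P i z) (at 0)"
    and cont: "\<And>i. continuous_on U (P i)"
  shows "(G has_derivative (\<lambda>h. \<Sum>i\<in>UNIV. h$i *\<^sub>R P i x)) (at x)"
  unfolding has_derivative_at_alt
proof (intro conjI allI impI)
  show "bounded_linear (\<lambda>h. \<Sum>i\<in>UNIV. h$i *\<^sub>R P i x)"
    by (intro bounded_linear_sum bounded_linear_compose[OF bounded_linear_scaleR_left] bounded_linear_vec_nth)
  fix e :: real assume "e > 0"
  define e' where "e' = e / real CARD('n)"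
  have "e' > 0" using \<open>e > 0\<close> by (simp add: e'_def)
  have "\<forall>\<^sub>F z in nhds x. z \<in> U \<and> (\<forall>i. dist (P i z) (P i x) < e')"
  proof (intro eventually_conj eventually_all_finite)
    show "\<forall>\<^sub>F z in nhds x. z \<in> U" using U x eventually_nhds by blast
    fix i
    have "(P i \<longlongrightarrow> P i x) (at x)"
      using cont U x continuous_on_eq_continuous_at isCont_def by blast
    then have "\<forall>\<^sub>F z in nhds x. z \<noteq> x \<longrightarrow> dist (P i z) (P i x) < e'"
      using \<open>e' > 0\<close> by (simp add: tendsto_iff eventually_at_filter)
    then show "\<forall>\<^sub>F z in nhds x. dist (P i z) (P i x) < e'"
      by (rule eventually_mono) (use \<open>e' > 0\<close> in auto)
  qed
  then obtain d where "d > 0" and d: "\<And>z. dist z x < d \<Longrightarrow> z \<in> U \<and> (\<forall>i. dist (P i z) (P i x) < e')"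
    unfolding eventually_nhds_metric by (auto simp: dist_commute)
  show "\<exists>d>0. \<forall>y. norm (y - x) < d \<longrightarrow>
      norm (G y - G x - (\<Sum>i\<in>UNIV. (y - x)$i *\<^sub>R P i x)) \<le> e * norm (y - x)"
  proof (intro exI[of _ d] conjI allI impI \<open>d > 0\<close>)
    fix y assume "norm (y - x) < d"
    have "norm (G (x + (\<chi> j. if j \<in> UNIV then (y - x)$j else 0)) - G x - (\<Sum>i\<in>UNIV. (y - x)$i *\<^sub>R P i x))
        \<le> e' * card (UNIV :: 'n set) * norm (y - x)"
    proof (rule increment_along_coordinates_bound[OF _ _ \<open>norm (y - x) < d\<close> finite])
      show "((\<lambda>t. G (z + t *\<^sub>R axis i 1)) has_vector_derivative P i z) (at 0)" if "dist z x < d" for i z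
        using d der that by blast
      show "norm (P i z - P i x) \<le> e'" if "dist z x < d" for i z
        using d that by (simp add: dist_norm less_imp_le)
    qed
    also have "x + (\<chi> j. if j \<in> UNIV then (y - x)$j else 0) = y" by (simp add: vec_eq_iff)
    finally show "norm (G y - G x - (\<Sum>i\<in>UNIV. (y - x)$i *\<^sub>R P i x)) \<le> e * norm (y - x)"
      by (simp add: e'_def)
  qed
qed

lemma smooth_on_has_derivative:
  fixes f :: "real^'n::finite \<Rightarrow> real^'k::finite"
  assumes "open U" "smooth_on U f" "x \<in> U"
  shows "(iter_partial is f has_derivative (\<lambda>h. \<Sum>i\<in>UNIV. h$i *\<^sub>R iter_partial (i#is) f x)) (at x)"
proof (rule has_derivative_continuous_partials[OF assms(1,3)])
  fix i z assume "z \<in> U"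
  then have "(\<lambda>t. iter_partial is f (z + t *\<^sub>R axis i 1)) differentiable (at 0)"
    using assms(2) unfolding smooth_on_def by blast
  then show "((\<lambda>t. iter_partial is f (z + t *\<^sub>R axis i 1)) has_vector_derivative iter_partial (i # is) f z) (at 0)"
    by (simp add: partial_dir_def vector_derivative_works)
next
  show "continuous_on U (iter_partial (i # is) f)" for i
    using assms(2) unfolding smooth_on_def by blast
qed

context
  fixes T :: "real set" and H :: "nat \<Rightarrow> real \<Rightarrow> real^'n::finite" and f :: "real \<Rightarrow> real^'n"
  assumes perfect: "\<And>\<tau>. \<tau> \<in> T \<Longrightarrow> \<tau> islimpt T"
    and tower: "\<And>k \<tau>. \<tau> \<in> T \<Longrightarrow> (H k has_vector_derivative H (Suc k) \<tau>) (at \<tau> within T)"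
    and base: "\<And>\<tau>. \<tau> \<in> T \<Longrightarrow> f \<tau> = H 0 \<tau>"
begin

lemma cderiv_eq_derivative_tower: "\<tau> \<in> T \<Longrightarrow> cderiv k f T \<tau> = H k \<tau>"
proof (induction k arbitrary: \<tau>)
  case 0
  then show ?case using base by simp
next
  case (Suc k)
  have "(cderiv k f T has_vector_derivative H (Suc k) \<tau>) (at \<tau> within T)"
    using Suc by (intro has_vector_derivative_transform[OF _ _ tower]) auto
  moreover have "at \<tau> within T \<noteq> bot"
    using perfect[OF Suc.prems] trivial_limit_within by blast
  ultimately show ?case by (simp add: vector_derivative_within)
qed

lemma smooth_curve_onI: "smooth_curve_on T f"
  unfolding smooth_curve_on_def
proof (intro allI ballI)
  fix k t assume t: "t \<in> T"
  show "(cderiv k f T has_vector_derivative cderiv (Suc k) f T t) (at t within T)"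
    unfolding cderiv_eq_derivative_tower[OF t]
    by (rule has_vector_derivative_transform[OF t _ tower[OF t]]) (simp add: cderiv_eq_derivative_tower)
qed

end

lemma smooth_curve_on_subset_cong:
  assumes "smooth_curve_on T f" "T' \<subseteq> T" "\<And>\<tau>. \<tau> \<in> T' \<Longrightarrow> \<tau> islimpt T'"
    "\<And>\<tau>. \<tau> \<in> T' \<Longrightarrow> g \<tau> = f \<tau>"
  shows "smooth_curve_on T' g"
proof (rule smooth_curve_onI[where H = "\<lambda>k. cderiv k f T"])
  fix k \<tau> assume "\<tau> \<in> T'"
  then show "(cderiv k f T has_vector_derivative cderiv (Suc k) f T \<tau>) (at \<tau> within T')"
    using assms(1,2) unfolding smooth_curve_on_def by (meson has_vector_derivative_within_subset subsetD)
qed (use assms in auto)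

lemma lists_Suc_length_image:
  "(\<lambda>(i, is). i # is) ` (UNIV \<times> {is::'a list. length is = k}) = {is. length is = Suc k}"
  by (auto simp: length_Suc_conv image_iff)

lemma smooth_curve_on_comp_line:
  fixes f :: "real^'n::finite \<Rightarrow> real^'k::finite"
  assumes U: "open U" and sm: "smooth_on U f" and TU: "\<And>\<tau>. \<tau> \<in> T \<Longrightarrow> x0 + \<tau> *\<^sub>R u \<in> U"
    and perfect: "\<And>\<tau>. \<tau> \<in> T \<Longrightarrow> \<tau> islimpt T"
  shows "smooth_curve_on T (\<lambda>\<tau>. f (x0 + \<tau> *\<^sub>R u))"
proof -
  define c where "c is = prod_list (map (\<lambda>i. u$i) is)" for "is" :: "'n list"
  \<comment> \<open>\<open>H k\<close> is the \<open>k\<close>-th derivative of the curve, obtained by iterating the chain rule.\<close>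
  define H where "H k \<tau> = (\<Sum>is | length is = k. c is *\<^sub>R iter_partial is f (x0 + \<tau> *\<^sub>R u))" for k \<tau>
  have partial_along_line: "((\<lambda>\<tau>. iter_partial is f (x0 + \<tau> *\<^sub>R u)) has_vector_derivative
      (\<Sum>i\<in>UNIV. u$i *\<^sub>R iter_partial (i#is) f (x0 + \<tau> *\<^sub>R u))) (at \<tau>)"
    if "x0 + \<tau> *\<^sub>R u \<in> U" for "is" \<tau>
  proof -
    have "((\<lambda>\<tau>. x0 + \<tau> *\<^sub>R u) has_derivative (\<lambda>h. h *\<^sub>R u)) (at \<tau>)"
      by (auto intro!: derivative_eq_intros)
    from has_derivative_compose[OF this smooth_on_has_derivative[OF U sm that]]
    show ?thesis by (simp add: has_vector_derivative_def scaleR_sum_right)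
  qed
  have "(H k has_vector_derivative H (Suc k) \<tau>) (at \<tau>)" if "x0 + \<tau> *\<^sub>R u \<in> U" for k \<tau>
  proof -
    have "(H k has_vector_derivative
        (\<Sum>is | length is = k. c is *\<^sub>R (\<Sum>i\<in>UNIV. u$i *\<^sub>R iter_partial (i#is) f (x0 + \<tau> *\<^sub>R u)))) (at \<tau>)"
      unfolding H_def[abs_def]
      by (intro has_vector_derivative_sum bounded_linear.has_vector_derivative[OF bounded_linear_scaleR_right]
          partial_along_line that)
    also have "(\<Sum>is | length is = k. c is *\<^sub>R (\<Sum>i\<in>UNIV. u$i *\<^sub>R iter_partial (i#is) f (x0 + \<tau> *\<^sub>R u)))
        = (\<Sum>i\<in>UNIV. \<Sum>is | length is = k. c (i # is) *\<^sub>R iter_partial (i # is) f (x0 + \<tau> *\<^sub>R u))"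
      by (subst sum.swap) (simp add: scaleR_sum_right c_def mult.commute)
    also have "\<dots> = H (Suc k) \<tau>"
      unfolding H_def lists_Suc_length_image[symmetric, of k]
      by (subst sum.reindex) (auto simp: inj_on_def sum.cartesian_product case_prod_beta)
    finally show ?thesis .
  qed
  then show ?thesis
    using TU perfect by (intro smooth_curve_onI[where H = H]) (auto simp: H_def c_def has_vector_derivative_at_within)
qed

lemma islimpt_Icc_Int_ball:
  fixes s b t \<delta> :: real
  assumes "s < b" "t \<in> {s..b}" "\<delta> > 0" "\<tau> \<in> {s..b} \<inter> ball t \<delta>"
  shows "\<tau> islimpt ({s..b} \<inter> ball t \<delta>)"
proof (rule connected_imp_perfect)
  show "connected ({s..b} \<inter> ball t \<delta>)"
    by (intro convex_connected convex_Int convex_ball) auto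
  have "max s (t - \<delta>/2) \<in> {s..b} \<inter> ball t \<delta>" "min b (t + \<delta>/2) \<in> {s..b} \<inter> ball t \<delta>"
    "max s (t - \<delta>/2) \<noteq> min b (t + \<delta>/2)"
    using assms(1-3) by (auto simp: dist_real_def)
  then show "{s..b} \<inter> ball t \<delta> \<noteq> {z}" for z by (metis singletonD)
qed fact

lemma smooth_piece_subinterval_cong:
  assumes sp: "smooth_piece A \<gamma> {s..u}" and sub: "s \<le> s'" "u' \<le> u" "s' < u'"
    and eq: "\<And>\<tau>. \<tau> \<in> {s'..u'} \<Longrightarrow> \<gamma>' \<tau> = \<gamma> \<tau>"
  shows "smooth_piece A \<gamma>' {s'..u'}"
  unfolding smooth_piece_def
proof (intro ballI impI)
  fix t c assume t: "t \<in> {s'..u'}" and c: "c \<in> A" and "\<gamma>' t \<in> fst c"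
  then have "t \<in> {s..u}" "\<gamma> t \<in> fst c" using sub eq by auto
  then obtain \<delta> where \<delta>: "\<delta> > 0" "\<gamma> ` ({s..u} \<inter> ball t \<delta>) \<subseteq> fst c"
      "smooth_curve_on ({s..u} \<inter> ball t \<delta>) (snd c \<circ> \<gamma>)"
    using sp c unfolding smooth_piece_def by meson
  have "\<gamma>' ` ({s'..u'} \<inter> ball t \<delta>) \<subseteq> fst c"
    using \<delta>(2) sub eq by (force simp: image_iff)
  moreover have "smooth_curve_on ({s'..u'} \<inter> ball t \<delta>) (snd c \<circ> \<gamma>')"
    using sub eq islimpt_Icc_Int_ball[OF sub(3) t \<delta>(1)]
    by (intro smooth_curve_on_subset_cong[OF \<delta>(3)]) auto
  ultimately show "\<exists>\<delta>>0. \<gamma>' ` ({s'..u'} \<inter> ball t \<delta>) \<subseteq> fst c \<and> smooth_curve_on ({s'..u'} \<inter> ball t \<delta>) (snd c \<circ> \<gamma>')"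
    using \<delta>(1) by blast
qed

lemma continuous_on_quadratic_form:
  fixes M :: "'a::topological_space \<Rightarrow> real^'n::finite^'n" and w :: "'a \<Rightarrow> real^'n"
  assumes "continuous_on S M" "continuous_on S w"
  shows "continuous_on S (\<lambda>p. w p \<bullet> (M p *v w p))"
proof -
  have eq: "(\<lambda>p. w p \<bullet> (M p *v w p)) = (\<lambda>p. \<Sum>i\<in>UNIV. w p $ i * (\<Sum>j\<in>UNIV. M p $ i $ j * w p $ j))"
    by (simp add: inner_vec_def matrix_vector_mult_def)
  show ?thesis unfolding eq using assms by (auto intro!: continuous_intros)
qed

lemma is_chart_open_image:
  assumes c: "is_chart c" and W: "open W" "W \<subseteq> fst c"
  shows "open (snd c ` W)"
proof -
  let ?\<psi> = "inv_into (fst c) (snd c)"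
  have "snd c ` W = snd c ` fst c \<inter> ?\<psi> -` W"
    using W c unfolding is_chart_def by (auto simp: inv_into_f_f f_inv_into_f)
  moreover have "open (snd c ` fst c \<inter> ?\<psi> -` W)"
    using c W unfolding is_chart_def by (intro continuous_open_preimage) auto
  ultimately show ?thesis by simp
qed

lemma transition_has_derivative:
  assumes A: "smooth_atlas A" and c: "c \<in> A" and d: "d \<in> A" and p: "p \<in> fst c \<inter> fst d"
  shows "(transition c d has_derivative (\<lambda>h. jac c d p *v h)) (at (snd c p))"
proof -
  define D where "D = (\<lambda>h. \<Sum>i\<in>UNIV. h$i *\<^sub>R iter_partial [i] (transition c d) (snd c p))"
  have "is_chart c" "is_chart d" using A c d by (auto simp: smooth_atlas_def)
  then have "open (snd c ` (fst c \<inter> fst d))"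
    by (intro is_chart_open_image) (auto simp: is_chart_def)
  moreover have "smooth_on (snd c ` (fst c \<inter> fst d)) (transition c d)"
    using A c d by (auto simp: smooth_atlas_def)
  ultimately have D: "(transition c d has_derivative D) (at (snd c p))"
    using smooth_on_has_derivative[of _ "transition c d" "snd c p" "[]"] p by (simp add: D_def)
  have "jac c d p = matrix D"
    unfolding jac_def using frechet_derivative_at[OF D] by simp
  then show ?thesis
    using D matrix_vector_mul(3)[OF has_derivative_bounded_linear[OF D]] by simp
qed

lemma compact_connected_nbhd_in_open_connected:
  fixes C :: "'a::euclidean_space set"
  assumes "open C" "connected C" "e \<in> C" "v \<in> C"
  obtains K \<epsilon> where "compact K" "connected K" "e \<in> K" "\<epsilon> > 0" "cball v \<epsilon> \<subseteq> K" "K \<subseteq> C"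
proof -
  obtain \<epsilon> where "\<epsilon> > 0" "cball v \<epsilon> \<subseteq> C"
    using assms(1,4) open_contains_cball by blast
  obtain \<pi> where \<pi>: "path \<pi>" "path_image \<pi> \<subseteq> C" "pathstart \<pi> = e" "pathfinish \<pi> = v"
    using connected_open_path_connected[OF assms(1,2)] assms(3,4) unfolding path_connected_def by blast
  have "v \<in> path_image \<pi>" "v \<in> cball v \<epsilon>"
    using \<pi> pathfinish_in_path_image[of \<pi>] \<open>\<epsilon> > 0\<close> by auto
  then have "connected (path_image \<pi> \<union> cball v \<epsilon>)"
    using \<pi> by (intro connected_Un connected_path_image connected_cball) blast+
  moreover have "compact (path_image \<pi> \<union> cball v \<epsilon>)"
    using \<pi> by (intro compact_Un compact_path_image compact_cball)
  moreover have "e \<in> path_image \<pi> \<union> cball v \<epsilon>"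
    using pathstart_in_path_image[of \<pi>] \<pi> by auto
  ultimately show ?thesis
    using that \<open>\<epsilon> > 0\<close> \<pi>(2) \<open>cball v \<epsilon> \<subseteq> C\<close> by blast
qed

lemma negative_cone_nbhd_of_compact:
  fixes G :: "'a::topological_space \<Rightarrow> real^'n::finite^'n"
  assumes W: "open W" "continuous_on W G" "q \<in> W"
    and K: "compact K" "K \<subseteq> {w. w \<bullet> (G q *v w) < 0}"
  obtains V where "open V" "q \<in> V" "V \<subseteq> W" "\<And>p. p \<in> V \<Longrightarrow> K \<subseteq> {w. w \<bullet> (G p *v w) < 0}"
proof -
  define Ob where "Ob = {(p, w). p \<in> W \<and> w \<bullet> (G p *v w) < 0}"
  have "continuous_on (W \<times> UNIV) (\<lambda>(p, w). w \<bullet> (G p *v w))"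
    unfolding case_prod_beta
    by (intro continuous_on_quadratic_form continuous_on_snd continuous_on_compose2[OF W(2) continuous_on_fst]) auto
  then have "open ((W \<times> UNIV) \<inter> (\<lambda>(p, w). w \<bullet> (G p *v w)) -` {..<0})"
    by (rule continuous_open_preimage[OF _ open_Times[OF W(1) open_UNIV] open_lessThan])
  moreover have "(W \<times> UNIV) \<inter> (\<lambda>(p, w). w \<bullet> (G p *v w)) -` {..<0} = Ob"
    by (auto simp: Ob_def)
  ultimately have "open Ob" by simp
  moreover have "{q} \<times> K \<subseteq> Ob"
    using K(2) W(3) unfolding Ob_def by blast
  ultimately obtain X where X: "q \<in> X" "open X" "X \<times> K \<subseteq> Ob"
    by (metis Elementary_Topology.tube_lemma[OF K(1)])
  show ?thesis
  proof (rule that)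
    show "open (X \<inter> W)" using X(2) W(1) by (rule open_Int)
    show "q \<in> X \<inter> W" using X(1) W(3) by blast
    show "K \<subseteq> {w. w \<bullet> (G p *v w) < 0}" if "p \<in> X \<inter> W" for p
      using X(3) that unfolding Ob_def by blast
  qed blast
qed

lemma negative_cone_component_uniform_nbhd:
  fixes G :: "'a::topological_space \<Rightarrow> real^'n::finite^'n"
  assumes W: "open W" "continuous_on W G" "q \<in> W"
    and v: "v \<in> connected_component_set {w. w \<bullet> (G q *v w) < 0} e"
  obtains V \<epsilon> where "open V" "q \<in> V" "V \<subseteq> W" "\<epsilon> > 0"
    "\<And>p. p \<in> V \<Longrightarrow> ball v \<epsilon> \<subseteq> connected_component_set {w. w \<bullet> (G p *v w) < 0} e"
proof -
  define cone where "cone p = {w. w \<bullet> (G p *v w) < 0}" for p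
  have "open (cone q)"
    unfolding cone_def
    by (intro open_Collect_less continuous_on_quadratic_form) (auto intro: continuous_intros)
  then have "open (connected_component_set (cone q) e)"
    by (rule open_connected_component)
  moreover have v: "v \<in> connected_component_set (cone q) e"
    using v by (simp add: cone_def)
  moreover from this have "e \<in> connected_component_set (cone q) e"
    using connected_component_in by (fastforce simp: connected_component_refl)
  ultimately obtain K \<epsilon> where K: "compact K" "connected K" "e \<in> K" "\<epsilon> > 0" "cball v \<epsilon> \<subseteq> K"
      "K \<subseteq> connected_component_set (cone q) e"
    using compact_connected_nbhd_in_open_connected[OF _ connected_connected_component] by blast
  then have "K \<subseteq> cone q" using connected_component_subset by blast
  then obtain V where V: "open V" "q \<in> V" "V \<subseteq> W" "\<And>p. p \<in> V \<Longrightarrow> K \<subseteq> cone p"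
    using negative_cone_nbhd_of_compact[OF W K(1)] unfolding cone_def by blast
  show ?thesis
  proof (rule that[OF V(1-3) K(4)])
    fix p assume "p \<in> V"
    then have "K \<subseteq> connected_component_set (cone p) e"
      using V(4) connected_component_maximal[OF K(3,2)] by blast
    then show "ball v \<epsilon> \<subseteq> connected_component_set {w. w \<bullet> (G p *v w) < 0} e"
      using K(5) ball_subset_cball unfolding cone_def by blast
  qed
qed

lemma finite_ex_successor:
  fixes P :: "'a::linorder set"
  assumes "finite P" "b \<in> P" "x < b"
  obtains u where "u \<in> P" "x < u" "{x<..<u} \<inter> P = {}"
proof
  let ?Q = "{p \<in> P. x < p}"
  have "Min ?Q \<in> ?Q" using assms by (intro Min_in) auto
  then show "Min ?Q \<in> P" "x < Min ?Q" by auto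
  show "{x<..<Min ?Q} \<inter> P = {}" using assms(1) by (auto simp: not_le[symmetric])
qed

lemma pw_smooth_curveI:
  assumes "a < b" "continuous_on {a..b} \<gamma>" "finite P" "a \<in> P" "b \<in> P" "P \<subseteq> {a..b}"
    "\<And>s u. s \<in> P \<Longrightarrow> u \<in> P \<Longrightarrow> s < u \<Longrightarrow> {s<..<u} \<inter> P = {} \<Longrightarrow> smooth_piece A \<gamma> {s..u}"
  shows "pw_smooth_curve A \<gamma> a b"
  unfolding pw_smooth_curve_def using assms by (intro conjI exI[of _ P]) auto

lemma pw_smooth_curveE:
  assumes "pw_smooth_curve A \<gamma> a b"
  obtains P where "a < b" "continuous_on {a..b} \<gamma>" "finite P" "a \<in> P" "b \<in> P" "P \<subseteq> {a..b}"
    "\<And>s u. s \<in> P \<Longrightarrow> u \<in> P \<Longrightarrow> s < u \<Longrightarrow> {s<..<u} \<inter> P = {} \<Longrightarrow> smooth_piece A \<gamma> {s..u}"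
proof -
  from assms obtain P where "a < b" "continuous_on {a..b} \<gamma>" "finite P" "a \<in> P" "b \<in> P" "P \<subseteq> {a..b}"
    "\<forall>s\<in>P. \<forall>u\<in>P. s < u \<and> {s<..<u} \<inter> P = {} \<longrightarrow> smooth_piece A \<gamma> {s..u}"
    unfolding pw_smooth_curve_def by (elim conjE exE)
  then show ?thesis using that by simp
qed

definition directed_tangent_within ::
  "bool \<Rightarrow> ('m::topological_space, 'n::finite) chart set \<Rightarrow> (('m,'n) chart \<Rightarrow> 'm \<Rightarrow> (real^'n) set)
     \<Rightarrow> (real \<Rightarrow> 'm) \<Rightarrow> real \<Rightarrow> real set \<Rightarrow> bool" where
  "directed_tangent_within fut A F \<gamma> t S \<longleftrightarrow>
     (\<forall>c\<in>A. \<gamma> t \<in> fst c \<longrightarrow>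
        (\<exists>v. ((snd c \<circ> \<gamma>) has_vector_derivative v) (at t within S) \<and> (if fut then v else - v) \<in> F c (\<gamma> t)))"

lemma directed_timelike_curve_iff:
  "directed_timelike_curve fut A F \<gamma> a b \<longleftrightarrow> pw_smooth_curve A \<gamma> a b \<and>
     (\<forall>t\<in>{a..<b}. directed_tangent_within fut A F \<gamma> t {t..b}) \<and>
     (\<forall>t\<in>{a<..b}. directed_tangent_within fut A F \<gamma> t {a..t})"
  unfolding directed_timelike_curve_def directed_tangent_within_def ..

lemma directed_tangent_within_subset:
  "directed_tangent_within fut A F \<gamma> t S \<Longrightarrow> T \<subseteq> S \<Longrightarrow> directed_tangent_within fut A F \<gamma> t T"
  unfolding directed_tangent_within_def by (meson has_vector_derivative_within_subset)

lemma directed_tangent_within_cong: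
  assumes "directed_tangent_within fut A F \<gamma> t S" "t \<in> S" "\<And>\<tau>. \<tau> \<in> S \<Longrightarrow> \<gamma>' \<tau> = \<gamma> \<tau>"
  shows "directed_tangent_within fut A F \<gamma>' t S"
  unfolding directed_tangent_within_def
proof (intro ballI impI)
  fix c assume "c \<in> A" "\<gamma>' t \<in> fst c"
  then obtain v where v: "((snd c \<circ> \<gamma>) has_vector_derivative v) (at t within S)"
      "(if fut then v else - v) \<in> F c (\<gamma> t)"
    using assms unfolding directed_tangent_within_def by auto
  have "((snd c \<circ> \<gamma>') has_vector_derivative v) (at t within S)"
    using assms(2,3) by (intro has_vector_derivative_transform[OF _ _ v(1)]) auto
  then show "\<exists>v. ((snd c \<circ> \<gamma>') has_vector_derivative v) (at t within S) \<and> (if fut then v else - v) \<in> F c (\<gamma>' t)"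
    using v(2) assms(2,3) by auto
qed

lemma directed_timelike_curve_initial_segment:
  assumes \<gamma>: "directed_timelike_curve fut A F \<gamma> a b" and s: "a < s" "s \<le> b"
  shows "directed_timelike_curve fut A F \<gamma> a s"
proof -
  obtain P where P: "continuous_on {a..b} \<gamma>" "finite P" "a \<in> P" "b \<in> P" "P \<subseteq> {a..b}"
    and pieces: "\<And>s u. s \<in> P \<Longrightarrow> u \<in> P \<Longrightarrow> s < u \<Longrightarrow> {s<..<u} \<inter> P = {} \<Longrightarrow> smooth_piece A \<gamma> {s..u}"
    using \<gamma> by (auto simp: directed_timelike_curve_iff elim: pw_smooth_curveE)
  define P' where "P' = P \<inter> {a..<s} \<union> {s}"
  have "smooth_piece A \<gamma> {s1..u1}"
    if s1: "s1 \<in> P'" and u1: "u1 \<in> P'" and "s1 < u1" and gap: "{s1<..<u1} \<inter> P' = {}" for s1 u1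
  proof -
    have "s1 \<in> P" "s1 < b" "u1 \<le> s" using s1 u1 \<open>s1 < u1\<close> s by (auto simp: P'_def)
    then obtain u0 where u0: "u0 \<in> P" "s1 < u0" "{s1<..<u0} \<inter> P = {}"
      using finite_ex_successor[OF P(2,4)] by blast
    have "u1 \<le> u0"
    proof (rule ccontr)
      assume "\<not> u1 \<le> u0"
      then have "u0 \<in> {s1<..<u1} \<inter> P'" using u0 \<open>u1 \<le> s\<close> P(5) by (auto simp: P'_def)
      with gap show False by blast
    qed
    then show ?thesis
      by (rule smooth_piece_subinterval_cong[OF pieces[OF \<open>s1 \<in> P\<close> u0], rotated]) (use \<open>s1 < u1\<close> in auto)
  qed
  then have "pw_smooth_curve A \<gamma> a s"
    using P s by (intro pw_smooth_curveI[where P = P']) (auto simp: P'_def intro: continuous_on_subset)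
  moreover have "directed_tangent_within fut A F \<gamma> t {t..s}" if "t \<in> {a..<s}" for t
    by (rule directed_tangent_within_subset[where S = "{t..b}"])
      (use \<gamma> s that in \<open>auto simp: directed_timelike_curve_iff\<close>)
  ultimately show ?thesis
    using \<gamma> s unfolding directed_timelike_curve_iff by auto
qed

lemma pw_smooth_curve_join:
  assumes \<gamma>1: "pw_smooth_curve A \<gamma>1 a s" and \<gamma>2: "pw_smooth_curve A \<gamma>2 s b" and meet: "\<gamma>1 s = \<gamma>2 s"
  shows "pw_smooth_curve A (\<lambda>\<tau>. if \<tau> \<le> s then \<gamma>1 \<tau> else \<gamma>2 \<tau>) a b"
proof -
  define \<gamma> where "\<gamma> \<tau> = (if \<tau> \<le> s then \<gamma>1 \<tau> else \<gamma>2 \<tau>)" for \<tau>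
  have \<gamma>1_eq: "\<gamma> \<tau> = \<gamma>1 \<tau>" if "\<tau> \<le> s" for \<tau> using that by (simp add: \<gamma>_def)
  have \<gamma>2_eq: "\<gamma> \<tau> = \<gamma>2 \<tau>" if "s \<le> \<tau>" for \<tau> using that meet by (auto simp: \<gamma>_def)
  obtain P1 where P1: "a < s" "continuous_on {a..s} \<gamma>1" "finite P1" "a \<in> P1" "s \<in> P1" "P1 \<subseteq> {a..s}"
    and pieces1: "\<And>s' u. s' \<in> P1 \<Longrightarrow> u \<in> P1 \<Longrightarrow> s' < u \<Longrightarrow> {s'<..<u} \<inter> P1 = {} \<Longrightarrow> smooth_piece A \<gamma>1 {s'..u}"
    using pw_smooth_curveE[OF \<gamma>1] by blast
  obtain P2 where P2: "s < b" "continuous_on {s..b} \<gamma>2" "finite P2" "s \<in> P2" "b \<in> P2" "P2 \<subseteq> {s..b}"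
    and pieces2: "\<And>s' u. s' \<in> P2 \<Longrightarrow> u \<in> P2 \<Longrightarrow> s' < u \<Longrightarrow> {s'<..<u} \<inter> P2 = {} \<Longrightarrow> smooth_piece A \<gamma>2 {s'..u}"
    using pw_smooth_curveE[OF \<gamma>2] by blast
  have "smooth_piece A \<gamma> {s1..u1}"
    if P: "s1 \<in> P1 \<union> P2" "u1 \<in> P1 \<union> P2" "s1 < u1" and gap: "{s1<..<u1} \<inter> (P1 \<union> P2) = {}" for s1 u1
  proof (cases "u1 \<le> s")
    case True
    then have "s1 \<in> P1" "u1 \<in> P1" using P P1 P2 by force+
    with pieces1 P(3) gap have "smooth_piece A \<gamma>1 {s1..u1}" by blast
    then show ?thesis
      by (rule smooth_piece_subinterval_cong[where s = s1 and u = u1]) (use P(3) True \<gamma>1_eq in auto)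
  next
    case False
    have "s \<le> s1"
    proof (rule ccontr)
      assume "\<not> s \<le> s1"
      then have "s \<in> {s1<..<u1} \<inter> (P1 \<union> P2)" using False P1 by auto
      with gap show False by blast
    qed
    then have "s1 \<in> P2" "u1 \<in> P2" using P P1 P2 False by force+
    with pieces2 P(3) gap have "smooth_piece A \<gamma>2 {s1..u1}" by blast
    then show ?thesis
      by (rule smooth_piece_subinterval_cong[where s = s1 and u = u1]) (use P(3) \<open>s \<le> s1\<close> \<gamma>2_eq in auto)
  qed
  moreover have "continuous_on {a..b} \<gamma>"
    unfolding \<gamma>_def
  proof (rule continuous_on_cases_le[where h = "\<lambda>\<tau>. \<tau>"])
    show "continuous_on {\<tau> \<in> {a..b}. \<tau> \<le> s} \<gamma>1" by (rule continuous_on_subset[OF P1(2)]) auto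
    show "continuous_on {\<tau> \<in> {a..b}. s \<le> \<tau>} \<gamma>2" by (rule continuous_on_subset[OF P2(2)]) auto
  qed (auto simp: meet intro: continuous_on_id)
  ultimately show ?thesis
    unfolding \<gamma>_def[symmetric] using P1 P2 by (intro pw_smooth_curveI[where P = "P1 \<union> P2"]) auto
qed

lemma directed_timelike_curve_join:
  assumes \<gamma>1: "directed_timelike_curve fut A F \<gamma>1 a s" and \<gamma>2: "directed_timelike_curve fut A F \<gamma>2 s b"
    and meet: "\<gamma>1 s = \<gamma>2 s"
  shows "directed_timelike_curve fut A F (\<lambda>\<tau>. if \<tau> \<le> s then \<gamma>1 \<tau> else \<gamma>2 \<tau>) a b"
proof -
  define \<gamma> where "\<gamma> \<tau> = (if \<tau> \<le> s then \<gamma>1 \<tau> else \<gamma>2 \<tau>)" for \<tau>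
  have \<gamma>1_eq: "\<gamma> \<tau> = \<gamma>1 \<tau>" if "\<tau> \<le> s" for \<tau> using that by (simp add: \<gamma>_def)
  have \<gamma>2_eq: "\<gamma> \<tau> = \<gamma>2 \<tau>" if "s \<le> \<tau>" for \<tau> using that meet by (auto simp: \<gamma>_def)
  have "a < s" using \<gamma>1 by (auto simp: directed_timelike_curve_iff elim: pw_smooth_curveE)
  have "directed_tangent_within fut A F \<gamma> t {t..b}" if t: "t \<in> {a..<b}" for t
  proof (cases "t < s")
    case True
    then have "directed_tangent_within fut A F \<gamma>1 t {t..s}"
      using \<gamma>1 t unfolding directed_timelike_curve_iff by auto
    then have "directed_tangent_within fut A F \<gamma> t {t..s}"
      by (rule directed_tangent_within_cong) (use True \<gamma>1_eq in auto)
    then show ?thesis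
      using True t by (simp add: directed_tangent_within_def at_within_Icc_at_right)
  next
    case False
    then have "directed_tangent_within fut A F \<gamma>2 t {t..b}"
      using \<gamma>2 t unfolding directed_timelike_curve_iff by auto
    then show ?thesis
      by (rule directed_tangent_within_cong) (use False t \<gamma>2_eq in auto)
  qed
  moreover have "directed_tangent_within fut A F \<gamma> t {a..t}" if t: "t \<in> {a<..b}" for t
  proof (cases "t \<le> s")
    case True
    then have "directed_tangent_within fut A F \<gamma>1 t {a..t}"
      using \<gamma>1 t unfolding directed_timelike_curve_iff by auto
    then show ?thesis
      by (rule directed_tangent_within_cong) (use True t \<gamma>1_eq in auto)
  next
    case False
    then have "directed_tangent_within fut A F \<gamma>2 t {s..t}"
      using \<gamma>2 t unfolding directed_timelike_curve_iff by auto
    then have "directed_tangent_within fut A F \<gamma> t {s..t}"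
      by (rule directed_tangent_within_cong) (use False \<gamma>2_eq in auto)
    then show ?thesis
      using False t \<open>a < s\<close> by (simp add: directed_tangent_within_def at_within_Icc_at_left)
  qed
  moreover have "pw_smooth_curve A \<gamma> a b"
    unfolding \<gamma>_def using \<gamma>1 \<gamma>2 meet by (intro pw_smooth_curve_join) (auto simp: directed_timelike_curve_iff)
  ultimately show ?thesis
    unfolding directed_timelike_curve_iff \<gamma>_def by blast
qed

lemma transition_along_line_has_vector_derivative:
  assumes A: "smooth_atlas A" and c: "c \<in> A" and d: "d \<in> A"
    and p: "p \<in> fst c \<inter> fst d" "snd c p = x0 + \<tau> *\<^sub>R u"
  shows "((\<lambda>\<sigma>. transition c d (x0 + \<sigma> *\<^sub>R u)) has_vector_derivative jac c d p *v u) (at \<tau>)"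
proof -
  have "((\<lambda>\<sigma>. x0 + \<sigma> *\<^sub>R u) has_derivative (\<lambda>h. h *\<^sub>R u)) (at \<tau>)"
    by (auto intro!: derivative_eq_intros)
  moreover have "(transition c d has_derivative (\<lambda>h. jac c d p *v h)) (at (x0 + \<tau> *\<^sub>R u))"
    using transition_has_derivative[OF A c d p(1)] p(2) by simp
  ultimately have "((\<lambda>\<sigma>. transition c d (x0 + \<sigma> *\<^sub>R u)) has_derivative (\<lambda>h. jac c d p *v (h *\<^sub>R u))) (at \<tau>)"
    by (rule has_derivative_compose)
  then show ?thesis
    by (simp add: has_vector_derivative_def matrix_vector_mult_scaleR)
qed

lemma smooth_piece_chart_line:
  assumes A: "smooth_atlas A" and c: "c \<in> A" and "s < b"
    and line: "\<And>\<tau>. \<tau> \<in> {s..b} \<Longrightarrow> x0 + \<tau> *\<^sub>R u \<in> snd c ` fst c"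
  shows "smooth_piece A (\<lambda>\<tau>. inv_into (fst c) (snd c) (x0 + \<tau> *\<^sub>R u)) {s..b}"
  unfolding smooth_piece_def
proof (intro ballI impI)
  define \<gamma> where "\<gamma> \<tau> = inv_into (fst c) (snd c) (x0 + \<tau> *\<^sub>R u)" for \<tau>
  fix t d assume t: "t \<in> {s..b}" and d: "d \<in> A" "\<gamma> t \<in> fst d"
  have chart: "is_chart c" "is_chart d" using A c d by (auto simp: smooth_atlas_def)
  define U where "U = snd c ` (fst c \<inter> fst d)"
  have "open U"
    unfolding U_def using chart by (intro is_chart_open_image) (auto simp: is_chart_def)
  then have "open ((\<lambda>\<tau>. x0 + \<tau> *\<^sub>R u) -` U)"
    by (rule continuous_open_vimage) (auto intro!: continuous_intros)
  moreover have "x0 + t *\<^sub>R u \<in> U"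
  proof -
    obtain p where "p \<in> fst c" "x0 + t *\<^sub>R u = snd c p" using line[OF t] by blast
    moreover from this have "\<gamma> t = p" using chart(1) by (simp add: \<gamma>_def is_chart_def inv_into_f_f)
    ultimately show ?thesis using d(2) by (auto simp: U_def)
  qed
  ultimately obtain \<delta> where "\<delta> > 0" and \<delta>: "ball t \<delta> \<subseteq> (\<lambda>\<tau>. x0 + \<tau> *\<^sub>R u) -` U"
    using open_contains_ball by blast
  have "\<gamma> ` ({s..b} \<inter> ball t \<delta>) \<subseteq> fst d"
    using \<delta> chart(1) by (auto simp: U_def \<gamma>_def is_chart_def inv_into_f_f)
  moreover have "smooth_curve_on ({s..b} \<inter> ball t \<delta>) (\<lambda>\<sigma>. transition c d (x0 + \<sigma> *\<^sub>R u))"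
  proof (rule smooth_curve_on_comp_line[OF \<open>open U\<close>])
    show "smooth_on U (transition c d)" using A c d unfolding U_def smooth_atlas_def by blast
  qed (use \<delta> islimpt_Icc_Int_ball[OF \<open>s < b\<close> t \<open>\<delta> > 0\<close>] in auto)
  ultimately show "\<exists>\<delta>>0. \<gamma> ` ({s..b} \<inter> ball t \<delta>) \<subseteq> fst d \<and> smooth_curve_on ({s..b} \<inter> ball t \<delta>) (snd d \<circ> \<gamma>)"
    using \<open>\<delta> > 0\<close> by (auto simp: transition_def \<gamma>_def o_def)
qed

lemma directed_timelike_curve_chart_line:
  assumes A: "smooth_atlas A" and F: "time_orientation A g F" and c: "c \<in> A" and "s < b"
    and line: "\<And>\<tau>. \<tau> \<in> {s..b} \<Longrightarrow> x0 + \<tau> *\<^sub>R u \<in> snd c ` fst c"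
    and dir: "\<And>\<tau>. \<tau> \<in> {s..b} \<Longrightarrow> (if fut then u else - u) \<in> F c (inv_into (fst c) (snd c) (x0 + \<tau> *\<^sub>R u))"
  shows "directed_timelike_curve fut A F (\<lambda>\<tau>. inv_into (fst c) (snd c) (x0 + \<tau> *\<^sub>R u)) s b"
proof -
  define \<psi> where "\<psi> = inv_into (fst c) (snd c)"
  define \<gamma> where "\<gamma> \<tau> = \<psi> (x0 + \<tau> *\<^sub>R u)" for \<tau>
  have chart: "is_chart c" using A c by (simp add: smooth_atlas_def)
  have "directed_tangent_within fut A F \<gamma> \<tau> S" if \<tau>: "\<tau> \<in> {s..b}" for \<tau> S
    unfolding directed_tangent_within_def
  proof (intro ballI impI)
    fix d assume d: "d \<in> A" "\<gamma> \<tau> \<in> fst d"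
    have p: "\<gamma> \<tau> \<in> fst c \<inter> fst d" "snd c (\<gamma> \<tau>) = x0 + \<tau> *\<^sub>R u"
      using line[OF \<tau>] d by (auto simp: \<gamma>_def \<psi>_def inv_into_into f_inv_into_f)
    have "snd d \<circ> \<gamma> = (\<lambda>\<sigma>. transition c d (x0 + \<sigma> *\<^sub>R u))"
      by (auto simp: transition_def \<gamma>_def \<psi>_def)
    then have "((snd d \<circ> \<gamma>) has_vector_derivative jac c d (\<gamma> \<tau>) *v u) (at \<tau> within S)"
      using transition_along_line_has_vector_derivative[OF A c d(1) p] has_vector_derivative_at_within by simp
    moreover have "\<forall>v. v \<in> F c (\<gamma> \<tau>) \<longleftrightarrow> jac c d (\<gamma> \<tau>) *v v \<in> F d (\<gamma> \<tau>)"
      using F c d(1) p(1) unfolding time_orientation_def by blast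
    moreover have "(if fut then u else - u) \<in> F c (\<gamma> \<tau>)"
      using dir[OF \<tau>] by (simp add: \<gamma>_def \<psi>_def)
    ultimately show "\<exists>v. ((snd d \<circ> \<gamma>) has_vector_derivative v) (at \<tau> within S) \<and> (if fut then v else - v) \<in> F d (\<gamma> \<tau>)"
      by (cases fut) (auto simp: vec.neg)
  qed
  moreover have "continuous_on {s..b} \<gamma>"
  proof -
    have "continuous_on (snd c ` fst c) \<psi>" using chart by (simp add: is_chart_def \<psi>_def)
    moreover have "continuous_on {s..b} (\<lambda>\<tau>. x0 + \<tau> *\<^sub>R u)" by (intro continuous_intros)
    moreover have "(\<lambda>\<tau>. x0 + \<tau> *\<^sub>R u) ` {s..b} \<subseteq> snd c ` fst c" using line by blast
    ultimately show ?thesis unfolding \<gamma>_def by (rule continuous_on_compose2)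
  qed
  moreover have "smooth_piece A \<gamma> {s..b}"
    unfolding \<gamma>_def \<psi>_def using A c \<open>s < b\<close> line by (rule smooth_piece_chart_line)
  ultimately have "pw_smooth_curve A \<gamma> s b \<and> (\<forall>\<tau>\<in>{s..b}. \<forall>S. directed_tangent_within fut A F \<gamma> \<tau> S)"
    using \<open>s < b\<close> by (auto intro!: pw_smooth_curveI[where P = "{s, b}"])
  then show ?thesis
    unfolding directed_timelike_curve_iff \<gamma>_def \<psi>_def by auto
qed

lemma directed_timelike_curve_extend_along_chart_segment:
  assumes A: "smooth_atlas A" and F: "time_orientation A g F" and c: "c \<in> A"
    and \<gamma>: "directed_timelike_curve fut A F \<gamma> a s" and "s < b" and "\<gamma> s \<in> fst c"
    and seg: "closed_segment (snd c (\<gamma> s)) y \<subseteq> snd c ` fst c"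
    and dir: "\<And>z. z \<in> closed_segment (snd c (\<gamma> s)) y \<Longrightarrow>
      (if fut then (y - snd c (\<gamma> s)) /\<^sub>R (b - s) else - ((y - snd c (\<gamma> s)) /\<^sub>R (b - s)))
        \<in> F c (inv_into (fst c) (snd c) z)"
  shows "\<exists>\<gamma>'. directed_timelike_curve fut A F \<gamma>' a b \<and> \<gamma>' a = \<gamma> a \<and> \<gamma>' b = inv_into (fst c) (snd c) y"
proof -
  define xs where "xs = snd c (\<gamma> s)"
  define u where "u = (y - xs) /\<^sub>R (b - s)"
  define x0 where "x0 = xs - s *\<^sub>R u"
  have on_segment: "x0 + \<tau> *\<^sub>R u \<in> closed_segment xs y" if "\<tau> \<in> {s..b}" for \<tau>
  proof -
    have "x0 + \<tau> *\<^sub>R u = xs + (\<tau> - s) *\<^sub>R u" by (simp add: x0_def algebra_simps)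
    also have "\<dots> = xs + ((\<tau> - s) / (b - s)) *\<^sub>R (y - xs)" by (simp add: u_def divide_inverse)
    also have "\<dots> = (1 - (\<tau> - s) / (b - s)) *\<^sub>R xs + ((\<tau> - s) / (b - s)) *\<^sub>R y"
      by (simp add: algebra_simps)
    finally have "x0 + \<tau> *\<^sub>R u = \<dots>" .
    moreover have "0 \<le> (\<tau> - s) / (b - s)" "(\<tau> - s) / (b - s) \<le> 1"
      using that \<open>s < b\<close> by (auto simp: divide_simps)
    ultimately show ?thesis unfolding closed_segment_def by blast
  qed
  define \<sigma> where "\<sigma> \<tau> = inv_into (fst c) (snd c) (x0 + \<tau> *\<^sub>R u)" for \<tau>
  have "directed_timelike_curve fut A F \<sigma> s b"
    unfolding \<sigma>_def
    by (rule directed_timelike_curve_chart_line[OF A F c \<open>s < b\<close>])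
      (use on_segment seg dir in \<open>auto simp: u_def xs_def\<close>)
  moreover have "\<sigma> s = \<gamma> s"
    using \<open>\<gamma> s \<in> fst c\<close> A c by (simp add: \<sigma>_def x0_def xs_def smooth_atlas_def is_chart_def inv_into_f_f)
  ultimately have "directed_timelike_curve fut A F (\<lambda>\<tau>. if \<tau> \<le> s then \<gamma> \<tau> else \<sigma> \<tau>) a b"
    by (intro directed_timelike_curve_join[OF \<gamma>]) auto
  moreover have "a < s" using \<gamma> by (auto simp: directed_timelike_curve_iff elim: pw_smooth_curveE)
  moreover have "x0 + b *\<^sub>R u = xs + (b - s) *\<^sub>R u" by (simp add: x0_def algebra_simps)
  then have "x0 + b *\<^sub>R u = y" using \<open>s < b\<close> by (simp add: u_def)
  ultimately show ?thesis
    using \<open>s < b\<close> by (intro exI[of _ "\<lambda>\<tau>. if \<tau> \<le> s then \<gamma> \<tau> else \<sigma> \<tau>"]) (auto simp: \<sigma>_def)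
qed

lemma tendsto_left_difference_quotient:
  fixes f :: "real \<Rightarrow> 'a::real_normed_vector"
  assumes "(f has_vector_derivative v) (at_left b)"
  shows "((\<lambda>s. (f b - f s) /\<^sub>R (b - s)) \<longlongrightarrow> v) (at_left b)"
proof -
  have "((\<lambda>s. (1 / norm (s - b)) *\<^sub>R (f s - (f b + (s - b) *\<^sub>R v))) \<longlongrightarrow> 0) (at_left b)"
    using assms by (simp add: has_vector_derivative_def has_derivative_within)
  moreover have "\<forall>\<^sub>F s in at_left b. (1 / norm (s - b)) *\<^sub>R (f s - (f b + (s - b) *\<^sub>R v)) = v - (f b - f s) /\<^sub>R (b - s)"
    unfolding eventually_at_filter
  proof (rule always_eventually, intro allI impI)
    fix s assume "s \<noteq> b" "s \<in> {..<b}"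
    then have n: "norm (s - b) = b - s" and "s < b" by auto
    have e: "f s - (f b + (s - b) *\<^sub>R v) = (b - s) *\<^sub>R v - (f b - f s)"
      by (simp add: algebra_simps)
    show "(1 / norm (s - b)) *\<^sub>R (f s - (f b + (s - b) *\<^sub>R v)) = v - (f b - f s) /\<^sub>R (b - s)"
      unfolding e n using \<open>s < b\<close> by (simp add: scaleR_right_diff_distrib divide_inverse_commute)
  qed
  ultimately have "((\<lambda>s. v - (f b - f s) /\<^sub>R (b - s)) \<longlongrightarrow> 0) (at_left b)"
    by (rule Lim_transform_eventually)
  then have "((\<lambda>s. v - (v - (f b - f s) /\<^sub>R (b - s))) \<longlongrightarrow> v - 0) (at_left b)"
    by (intro tendsto_diff tendsto_const)
  then show ?thesis by simp
qed

lemma left_difference_quotient_approx: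
  fixes \<gamma> :: "real \<Rightarrow> 'm::topological_space" and \<phi> :: "'m \<Rightarrow> 'a::real_normed_vector"
  assumes "a < b" "continuous_on {a..b} \<gamma>" "((\<phi> \<circ> \<gamma>) has_vector_derivative v) (at_left b)"
    and "open B" "\<gamma> b \<in> B" "\<epsilon> > 0"
  obtains s where "a < s" "s < b" "\<gamma> s \<in> B" "norm ((\<phi> (\<gamma> b) - \<phi> (\<gamma> s)) /\<^sub>R (b - s) - v) < \<epsilon>"
proof -
  have "(\<gamma> \<longlongrightarrow> \<gamma> b) (at_left b)"
    using assms(1,2) by (simp add: continuous_on_def at_within_Icc_at_left[symmetric])
  then have "\<forall>\<^sub>F s in at_left b. \<gamma> s \<in> B"
    using assms(4,5) by (rule topological_tendstoD)
  moreover have "\<forall>\<^sub>F s in at_left b. dist ((\<phi> (\<gamma> b) - \<phi> (\<gamma> s)) /\<^sub>R (b - s)) v < \<epsilon>"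
    using tendsto_left_difference_quotient[OF assms(3)] assms(6) by (simp add: tendsto_iff)
  moreover have "\<forall>\<^sub>F s in at_left b. s \<in> {a<..<b}"
    using assms(1) by (rule eventually_at_left_real)
  ultimately have "\<forall>\<^sub>F s in at_left b. a < s \<and> s < b \<and> \<gamma> s \<in> B \<and>
      norm ((\<phi> (\<gamma> b) - \<phi> (\<gamma> s)) /\<^sub>R (b - s) - v) < \<epsilon>"
    by eventually_elim (auto simp: dist_norm)
  then show ?thesis
    using that eventually_happens'[OF trivial_limit_at_left_real] by blast
qed

lemma time_orientation_uniform_cone_nbhd:
  assumes g: "cont_lorentz_metric A g" and F: "time_orientation A g F" and c: "c \<in> A"
    and W: "open W" "W \<subseteq> fst c" "\<And>p. p \<in> W \<Longrightarrow> e \<in> F c p"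
    and q: "q \<in> W" and w: "w \<in> F c q"
  obtains V \<epsilon> where "open V" "q \<in> V" "V \<subseteq> W" "\<epsilon> > 0" "\<And>p. p \<in> V \<Longrightarrow> ball w \<epsilon> \<subseteq> F c p"
proof -
  have F_component: "F c p = connected_component_set {v. v \<bullet> (g c p *v v) < 0} e" if p: "p \<in> W" for p
  proof -
    obtain w' where "F c p = connected_component_set (tcone g c p) w'"
      using F c W p unfolding time_orientation_def by blast
    with W(3)[OF p] show ?thesis unfolding tcone_def by (metis connected_component_eq)
  qed
  have "continuous_on (fst c) (g c)"
    using g c unfolding cont_lorentz_metric_def by blast
  then have cont: "continuous_on W (g c)"
    using W(2) by (rule continuous_on_subset)
  have "w \<in> connected_component_set {v. v \<bullet> (g c q *v v) < 0} e"
    using w F_component[OF q] by simp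
  from negative_cone_component_uniform_nbhd[OF W(1) cont q this]
  obtain V \<epsilon> where V: "open V" "q \<in> V" "V \<subseteq> W" "\<epsilon> > 0"
    and ball: "\<And>p. p \<in> V \<Longrightarrow> ball w \<epsilon> \<subseteq> connected_component_set {v. v \<bullet> (g c p *v v) < 0} e"
    by blast
  have "ball w \<epsilon> \<subseteq> F c p" if p: "p \<in> V" for p
    using ball[OF p] F_component[of p] V(3) p by auto
  with V show ?thesis by (rule that)
qed

lemma difference_quotient_perturbation:
  fixes x y z v :: "'a::real_normed_vector"
  assumes "s < b" "norm ((x - z) /\<^sub>R (b - s) - v) < \<epsilon> / 2" "dist y x < \<epsilon> * (b - s) / 2"
  shows "norm ((y - z) /\<^sub>R (b - s) - v) < \<epsilon>"
proof -
  have "(y - z) /\<^sub>R (b - s) - v = ((x - z) /\<^sub>R (b - s) - v) + (y - x) /\<^sub>R (b - s)"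
    by (simp add: algebra_simps)
  then have "norm ((y - z) /\<^sub>R (b - s) - v) \<le> norm ((x - z) /\<^sub>R (b - s) - v) + norm ((y - x) /\<^sub>R (b - s))"
    by (metis norm_triangle_ineq)
  moreover have "norm ((y - x) /\<^sub>R (b - s)) < \<epsilon> / 2"
    using assms(1,3) by (simp add: dist_norm divide_simps)
  ultimately show ?thesis using assms(2) by linarith
qed

lemma directed_timelike_curve_endpoint_cone:
  assumes g: "cont_lorentz_metric A g" and F: "time_orientation A g F"
    and \<gamma>: "directed_timelike_curve fut A F \<gamma> a b"
  obtains c V \<epsilon> v where "c \<in> A" "open V" "\<gamma> b \<in> V" "V \<subseteq> fst c" "\<epsilon> > 0"
    "((snd c \<circ> \<gamma>) has_vector_derivative v) (at_left b)"
    "\<And>p. p \<in> V \<Longrightarrow> ball (if fut then v else - v) \<epsilon> \<subseteq> F c p"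
proof -
  obtain c W i0 where c: "c \<in> A" and W: "open W" "\<gamma> b \<in> W" "W \<subseteq> fst c"
    and e: "\<And>p. p \<in> W \<Longrightarrow> axis i0 1 \<in> F c p"
    using F unfolding time_orientation_def by meson
  have "a < b" using \<gamma> by (auto simp: directed_timelike_curve_iff elim: pw_smooth_curveE)
  then have "directed_tangent_within fut A F \<gamma> b {a..b}"
    using \<gamma> unfolding directed_timelike_curve_iff by auto
  then obtain v where v: "((snd c \<circ> \<gamma>) has_vector_derivative v) (at_left b)"
    "(if fut then v else - v) \<in> F c (\<gamma> b)"
    using c W \<open>a < b\<close> by (auto simp: directed_tangent_within_def at_within_Icc_at_left)
  obtain V \<epsilon> where V: "open V" "\<gamma> b \<in> V" "V \<subseteq> W" "\<epsilon> > 0"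
    and cone: "\<And>p. p \<in> V \<Longrightarrow> ball (if fut then v else - v) \<epsilon> \<subseteq> F c p"
    using time_orientation_uniform_cone_nbhd[OF g F c W(1,3) e W(2) v(2)] by blast
  show ?thesis
    by (rule that[OF c V(1,2) _ V(4) v(1) cone]) (use V(3) W(3) in blast)
qed

lemma directed_timelike_curve_endpoint_nbhd:
  assumes A: "smooth_atlas A" and g: "cont_lorentz_metric A g" and F: "time_orientation A g F"
    and \<gamma>: "directed_timelike_curve fut A F \<gamma> a b"
  obtains N where "open N" "\<gamma> b \<in> N"
    "\<And>q. q \<in> N \<Longrightarrow> \<exists>\<gamma>'. directed_timelike_curve fut A F \<gamma>' a b \<and> \<gamma>' a = \<gamma> a \<and> \<gamma>' b = q"
proof -
  define sg where "sg w = (if fut then w else - w)" for w :: "real^'b"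
  obtain c V \<epsilon> v where c: "c \<in> A" and V: "open V" "\<gamma> b \<in> V" "V \<subseteq> fst c" "\<epsilon> > 0"
    and v: "((snd c \<circ> \<gamma>) has_vector_derivative v) (at_left b)"
    and cone: "\<And>p. p \<in> V \<Longrightarrow> ball (if fut then v else - v) \<epsilon> \<subseteq> F c p"
    using directed_timelike_curve_endpoint_cone[OF g F \<gamma>] by blast
  have chart: "is_chart c" using A c by (simp add: smooth_atlas_def)
  define \<psi> where "\<psi> = inv_into (fst c) (snd c)"
  have \<psi>: "\<psi> (snd c p) = p" if "p \<in> fst c" for p
    using chart that by (simp add: \<psi>_def is_chart_def inv_into_f_f)
  define x where "x = snd c (\<gamma> b)"
  have "open (snd c ` V)" using chart V by (intro is_chart_open_image) auto
  moreover have "x \<in> snd c ` V" using V by (simp add: x_def)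
  ultimately obtain r where "r > 0" and r: "ball x r \<subseteq> snd c ` V"
    using open_contains_ball by blast
  have chart_nbhd: "open (fst c \<inter> snd c -` ball x \<rho>) \<and> \<gamma> b \<in> fst c \<inter> snd c -` ball x \<rho>" if "\<rho> > 0" for \<rho>
    using chart that V by (auto simp: x_def is_chart_def intro: continuous_open_preimage)
  have "a < b" "continuous_on {a..b} \<gamma>"
    using \<gamma> by (auto simp: directed_timelike_curve_iff elim: pw_smooth_curveE)
  moreover have "open (fst c \<inter> snd c -` ball x r)" "\<gamma> b \<in> fst c \<inter> snd c -` ball x r"
    using chart_nbhd[OF \<open>r > 0\<close>] by auto
  ultimately obtain s where s: "a < s" "s < b" "\<gamma> s \<in> fst c \<inter> snd c -` ball x r"
    and quotient: "norm ((x - snd c (\<gamma> s)) /\<^sub>R (b - s) - v) < \<epsilon> / 2"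
    using left_difference_quotient_approx[OF _ _ v _ _ half_gt_zero[OF \<open>\<epsilon> > 0\<close>]] unfolding x_def by blast
  define \<rho> where "\<rho> = min r (\<epsilon> * (b - s) / 2)"
  have "\<rho> > 0" using \<open>r > 0\<close> \<open>\<epsilon> > 0\<close> s by (simp add: \<rho>_def)
  show ?thesis
  proof (rule that)
    show "open (fst c \<inter> snd c -` ball x \<rho>)" "\<gamma> b \<in> fst c \<inter> snd c -` ball x \<rho>"
      using chart_nbhd[OF \<open>\<rho> > 0\<close>] by auto
    fix q assume q: "q \<in> fst c \<inter> snd c -` ball x \<rho>"
    define u where "u = (snd c q - snd c (\<gamma> s)) /\<^sub>R (b - s)"
    have segment: "closed_segment (snd c (\<gamma> s)) (snd c q) \<subseteq> ball x r"
      using s(3) q by (intro closed_segment_subset convex_ball) (auto simp: \<rho>_def)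
    have "dist (snd c q) x < \<epsilon> * (b - s) / 2"
      using q by (auto simp: \<rho>_def dist_commute)
    then have "norm (u - v) < \<epsilon>"
      unfolding u_def by (rule difference_quotient_perturbation[OF s(2) quotient])
    then have "sg u \<in> ball (sg v) \<epsilon>"
      by (cases fut) (simp_all add: sg_def dist_norm norm_minus_commute)
    moreover have "\<psi> z \<in> V" if z: "z \<in> ball x r" for z
    proof -
      obtain p where "p \<in> V" "z = snd c p" using r z by blast
      then show ?thesis using V(3) \<psi> by auto
    qed
    ultimately have direction: "sg u \<in> F c (\<psi> z)" if "z \<in> closed_segment (snd c (\<gamma> s)) (snd c q)" for z
      using cone[folded sg_def] segment that by blast
    have "closed_segment (snd c (\<gamma> s)) (snd c q) \<subseteq> snd c ` fst c"
      using segment r V(3) by blast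
    from directed_timelike_curve_extend_along_chart_segment[OF A F c
        directed_timelike_curve_initial_segment[OF \<gamma> s(1) less_imp_le[OF s(2)]] \<open>s < b\<close> IntD1[OF s(3)]
        this direction[unfolded u_def sg_def \<psi>_def]]
    show "\<exists>\<gamma>'. directed_timelike_curve fut A F \<gamma>' a b \<and> \<gamma>' a = \<gamma> a \<and> \<gamma>' b = q"
      using q \<psi> unfolding \<psi>_def by auto
  qed
qed

lemma open_directed_timelike_reachable:
  assumes "smooth_atlas A" "cont_lorentz_metric A g" "time_orientation A g F"
  shows "open {q. \<exists>\<gamma> a b. directed_timelike_curve fut A F \<gamma> a b \<and> \<gamma> a = p \<and> \<gamma> b = q}"
    (is "open ?R")
  unfolding open_subopen[of ?R]
proof
  fix q assume "q \<in> ?R"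
  then obtain \<gamma> a b where \<gamma>: "directed_timelike_curve fut A F \<gamma> a b" "\<gamma> a = p" "\<gamma> b = q" by blast
  obtain N where "open N" "\<gamma> b \<in> N"
    and reach: "\<And>q. q \<in> N \<Longrightarrow> \<exists>\<gamma>'. directed_timelike_curve fut A F \<gamma>' a b \<and> \<gamma>' a = \<gamma> a \<and> \<gamma>' b = q"
    using directed_timelike_curve_endpoint_nbhd[OF assms \<gamma>(1)] by blast
  have "N \<subseteq> ?R"
  proof
    fix q' assume "q' \<in> N"
    with reach \<gamma>(2) show "q' \<in> ?R" by blast
  qed
  with \<open>open N\<close> \<open>\<gamma> b \<in> N\<close> \<gamma>(3) show "\<exists>T. open T \<and> q \<in> T \<and> T \<subseteq> ?R" by blast
qed

theorem proposition2p1: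
  fixes A :: "('m::{t2_space,second_countable_topology}, 'n::finite) chart set"
    and g :: "('m,'n) chart \<Rightarrow> 'm \<Rightarrow> real^'n^'n"
    and F :: "('m,'n) chart \<Rightarrow> 'm \<Rightarrow> (real^'n) set"
  assumes "smooth_atlas A"
    and "cont_lorentz_metric A g"
    and "time_orientation A g F"
  shows "\<forall>p. open (I_plus A F p) \<and> open (I_minus A F p)"
  unfolding I_plus_def I_minus_def using open_directed_timelike_reachable[OF assms] by blast

end
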